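(* Let $\hat G=(\hat V,\hat E,w)$ be a weighted graph admitting a valid partition, and let $\mathcal{C}=\{C_1,\dots,C_m\}$ ($m>1$) be the minimal valid partition of $\hat V$. Suppose there is a claw w.r.t. $\mathcal{C}$, say $\{y_m\mid y_1,y_2,y_3\}$ with $y_i\in C_i$ for $i\in\{1,2,3,m\}$ (after relabeling clusters). For each $i\in[4,m-1]$ fix an arbitrary representative $y_i\in C_i$, let $V'=\{y_1,\dots,y_m\}$, and let $\mathsf{w}=w(y_1,y_m)=w(y_2,y_m)=w(y_3,y_m)$. Call a pair $\{y_a,y_b\}\subseteq V'$ light if $w(y_a,y_b)<\mathsf{w}$. Let $\mathsf{C}\subseteq V'$ be a maximum clique in the graph on $V'$ whose edges are the light pairs, among cliques containing $y_1,y_2,y_3$. For each $y_i\in\mathsf{C}$ let $\Pi_i=(C_i,\ \bigcup_{\ell\ne i}C_\ell)$. Then $\hat G$ has a valid bi-partition if and only if $\Pi_i$ is valid for some $y_i\in\mathsf{C}$.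
   Context: Weights are symmetric, nonnegative, $0$ for non-edges. A partition $\mathcal{S}=(S_1,\dots,S_t)$, $t>1$, of $\hat V$ into nonempty disjoint sets is valid w.r.t. $\hat G$ if (i) for every triple of distinct vertices $v_i,v_j,v_k$ with $w_{ij}>\max\{w_{ik},w_{jk}\}$, either all three lie in the same part, or $v_i,v_j$ lie in one part and $v_k$ in another; and (ii) for every triple with $w_{ij}=w_{ik}>w_{jk}$, it is not the case that $v_j,v_k$ lie in the same part while $v_i$ lies in a different part. A valid bi-partition is a valid partition with two parts. The minimal valid partition is a valid partition $\mathcal{C}$ that refines every valid partition (each part of $\mathcal{C}$ is contained in some part of any other valid partition); it exists whenever a valid partition exists. Four vertices $\{v_i\mid v_j,v_k,v_\ell\}$ form a claw w.r.t. $\mathcal{C}$ if they lie in four different parts of $\mathcal{C}$ and $w_{ij}=w_{ik}=w_{i\ell}>\max\{w_{jk},w_{j\ell},w_{k\ell}\}$. *)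

theory Defs
  imports Complex_Main
begin

text \<open>Weighted graph: finite vertex set V with a symmetric nonnegative weight
function w (weight 0 encodes a non-edge).\<close>

definition weighted_graph :: "'a set \<Rightarrow> ('a \<Rightarrow> 'a \<Rightarrow> real) \<Rightarrow> bool" where
  "weighted_graph V w \<longleftrightarrow> finite V \<and> (\<forall>x\<in>V. \<forall>y\<in>V. w x y = w y x \<and> w x y \<ge> 0)"

definition is_partition :: "'a set \<Rightarrow> 'a set set \<Rightarrow> bool" where
  "is_partition V P \<longleftrightarrow> (\<forall>S\<in>P. S \<noteq> {}) \<and> (\<forall>S\<in>P. \<forall>T\<in>P. S \<noteq> T \<longrightarrow> S \<inter> T = {})
     \<and> \<Union>P = V \<and> finite P \<and> card P > 1"

definition same_part :: "'a set set \<Rightarrow> 'a \<Rightarrow> 'a \<Rightarrow> bool" where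
  "same_part P x y \<longleftrightarrow> (\<exists>S\<in>P. x \<in> S \<and> y \<in> S)"

definition valid_partition :: "'a set \<Rightarrow> ('a \<Rightarrow> 'a \<Rightarrow> real) \<Rightarrow> 'a set set \<Rightarrow> bool" where
  "valid_partition V w P \<longleftrightarrow> is_partition V P \<and>
     (\<forall>vi\<in>V. \<forall>vj\<in>V. \<forall>vk\<in>V. distinct [vi, vj, vk] \<longrightarrow>
        w vi vj > max (w vi vk) (w vj vk) \<longrightarrow>
          ((same_part P vi vj \<and> same_part P vi vk) \<or> (same_part P vi vj \<and> \<not> same_part P vi vk))) \<and>
     (\<forall>vi\<in>V. \<forall>vj\<in>V. \<forall>vk\<in>V. distinct [vi, vj, vk] \<longrightarrow>
        w vi vj = w vi vk \<longrightarrow> w vi vj > w vj vk \<longrightarrow>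
          \<not> (same_part P vj vk \<and> \<not> same_part P vi vj))"

definition valid_bipartition :: "'a set \<Rightarrow> ('a \<Rightarrow> 'a \<Rightarrow> real) \<Rightarrow> 'a set set \<Rightarrow> bool" where
  "valid_bipartition V w P \<longleftrightarrow> valid_partition V w P \<and> card P = 2"

definition refines :: "'a set set \<Rightarrow> 'a set set \<Rightarrow> bool" where
  "refines P Q \<longleftrightarrow> (\<forall>S\<in>P. \<exists>T\<in>Q. S \<subseteq> T)"

definition minimal_valid_partition :: "'a set \<Rightarrow> ('a \<Rightarrow> 'a \<Rightarrow> real) \<Rightarrow> 'a set set \<Rightarrow> bool" where
  "minimal_valid_partition V w C \<longleftrightarrow> valid_partition V w C \<and>
     (\<forall>P. valid_partition V w P \<longrightarrow> refines C P)"

definition is_claw :: "'a set set \<Rightarrow> ('a \<Rightarrow> 'a \<Rightarrow> real) \<Rightarrow> 'a \<Rightarrow> 'a \<Rightarrow> 'a \<Rightarrow> 'a \<Rightarrow> bool" where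
  "is_claw C w vi vj vk vl \<longleftrightarrow>
     (\<exists>Si\<in>C. \<exists>Sj\<in>C. \<exists>Sk\<in>C. \<exists>Sl\<in>C. distinct [Si, Sj, Sk, Sl] \<and>
        vi \<in> Si \<and> vj \<in> Sj \<and> vk \<in> Sk \<and> vl \<in> Sl) \<and>
     w vi vj = w vi vk \<and> w vi vk = w vi vl \<and>
     w vi vj > max (w vj vk) (max (w vj vl) (w vk vl))"

end

theory Submission
  imports Defs
begin

(* Let {A, B} be a valid bi-partition with the claw centre y_m in A, and let W be the common
   weight of the claw edges. Rule (ii) with apex y_m keeps two leaves p, q out of B. Across the
   cut of a valid bi-partition no edge at p is heavier than the edge pq, so all edges from p to B
   are lighter than W; as y_m and p lie in different clusters, rule (i) for C and for {A, B} then
   gives w(y_m, v) = W for every v in B, and rule (ii) at apex y_m puts any two vertices of B into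
   one cluster. By minimality of C, B is itself a cluster. If its representative were outside the
   clique Cl, then Cl would lie in A and adding the representative would enlarge it. *)

definition light_clique :: "('a \<Rightarrow> 'a \<Rightarrow> real) \<Rightarrow> real \<Rightarrow> 'a set \<Rightarrow> bool" where
  "light_clique w W K \<longleftrightarrow> (\<forall>a\<in>K. \<forall>b\<in>K. a \<noteq> b \<longrightarrow> w a b < W)"

lemma same_part_pair_iff: "same_part {A, B} x y \<longleftrightarrow> (x \<in> A \<and> y \<in> A) \<or> (x \<in> B \<and> y \<in> B)"
  unfolding same_part_def by auto

lemma same_part_refl: "is_partition V P \<Longrightarrow> x \<in> V \<Longrightarrow> same_part P x x"
  unfolding is_partition_def same_part_def by blast

lemma is_partition_not_same_part:
  assumes "is_partition V P" "S \<in> P" "T \<in> P" "S \<noteq> T" "x \<in> S" "y \<in> T"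
  shows "\<not> same_part P x y"
proof
  assume "same_part P x y"
  then obtain U where "U \<in> P" "x \<in> U" "y \<in> U"
    unfolding same_part_def by blast
  with assms have "U = S" "U = T"
    unfolding is_partition_def by blast+
  with \<open>S \<noteq> T\<close> show False by simp
qed

lemma valid_partition_weight_le_max:
  assumes "valid_partition V w P" "x \<in> V" "y \<in> V" "z \<in> V" "distinct [x, y, z]"
    "\<not> same_part P x y"
  shows "w x y \<le> max (w x z) (w y z)"
  using assms unfolding valid_partition_def by (meson not_le)

lemma valid_partition_apex_same_part:
  assumes "valid_partition V w P" "x \<in> V" "y \<in> V" "z \<in> V" "distinct [x, y, z]"
    "w x y = w x z" "w y z < w x y" "same_part P y z"
  shows "same_part P x y"
  using assms unfolding valid_partition_def by blast

lemma valid_partition_pair_is_bipartition: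
  assumes "valid_partition V w {S, T}"
  shows "valid_bipartition V w {S, T}"
proof -
  have "card {S, T} > 1"
    using assms unfolding valid_partition_def is_partition_def by blast
  then have "S \<noteq> T"
    by (cases "S = T") auto
  then show ?thesis
    using assms unfolding valid_bipartition_def by simp
qed

lemma bipartition_with_first_part_containing:
  assumes "is_partition V P" "card P = 2" "x \<in> V"
  obtains A B where "P = {A, B}" "A \<inter> B = {}" "A \<union> B = V" "x \<in> A" "B \<noteq> {}"
proof -
  obtain A B where AB: "P = {A, B}" "A \<noteq> B"
    using assms(2) by (meson card_2_iff)
  moreover have "\<forall>S\<in>P. S \<noteq> {}" "\<forall>S\<in>P. \<forall>T\<in>P. S \<noteq> T \<longrightarrow> S \<inter> T = {}" "\<Union>P = V"
    using assms(1) unfolding is_partition_def by blast+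
  ultimately have parts: "A \<inter> B = {}" "A \<union> B = V" "A \<noteq> {}" "B \<noteq> {}"
    by auto
  show thesis
  proof (cases "x \<in> A")
    case True
    with AB(1) parts show thesis by (intro that)
  next
    case False
    with parts(2) assms(3) have "x \<in> B" by blast
    with AB(1) parts show thesis
      by (intro that[of B A]) (auto simp: insert_commute)
  qed
qed

lemma valid_bipartition_cross_weight_le:
  assumes valid: "valid_partition V w {A, B}" and AB: "A \<inter> B = {}" "A \<union> B = V"
    and sym: "\<And>a b. a \<in> V \<Longrightarrow> b \<in> V \<Longrightarrow> w a b = w b a"
    and pqv: "p \<in> A" "q \<in> A" "v \<in> B" "p \<noteq> q"
  shows "w p v \<le> w p q"
proof (rule ccontr)
  assume "\<not> w p v \<le> w p q"
  \<comment> \<open>rule (i) at p and at q gives w v p = w v q > w p q; rule (ii) at apex v then joins v to p\<close>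
  then have heavy: "w p q < w p v" by simp
  have V: "p \<in> V" "q \<in> V" "v \<in> V" and ne: "p \<noteq> v" "q \<noteq> v"
    using AB pqv by auto
  have sep: "\<not> same_part {A, B} p v" "\<not> same_part {A, B} q v"
    using AB pqv by (auto simp: same_part_pair_iff)
  have "w p v \<le> max (w p q) (w v q)"
    using valid_partition_weight_le_max[OF valid V(1,3,2)] ne pqv sep by simp
  with heavy have le1: "w p v \<le> w v q" by linarith
  have "w q v \<le> max (w q p) (w v p)"
    using valid_partition_weight_le_max[OF valid V(2,3,1)] ne pqv sep by simp
  with heavy le1 sym[OF V(1,2)] sym[OF V(2,3)] sym[OF V(1,3)] have "w v q \<le> w p v"
    by linarith
  with le1 heavy sym[OF V(1,3)] have "same_part {A, B} v p"
    using valid_partition_apex_same_part[OF valid V(3,1,2)] ne pqv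
    by (simp add: same_part_pair_iff)
  with sep show False
    by (auto simp: same_part_pair_iff)
qed

lemma claw_not_same_part:
  assumes "is_partition V C" "is_claw C w x y1 y2 y3"
  shows "\<not> same_part C x y1" "\<not> same_part C x y2" "\<not> same_part C x y3"
    "\<not> same_part C y1 y2" "\<not> same_part C y1 y3" "\<not> same_part C y2 y3"
proof -
  obtain Sx S1 S2 S3 where "Sx \<in> C" "S1 \<in> C" "S2 \<in> C" "S3 \<in> C" "distinct [Sx, S1, S2, S3]"
    "x \<in> Sx" "y1 \<in> S1" "y2 \<in> S2" "y3 \<in> S3"
    using assms(2) unfolding is_claw_def by blast
  then show "\<not> same_part C x y1" "\<not> same_part C x y2" "\<not> same_part C x y3"
    "\<not> same_part C y1 y2" "\<not> same_part C y1 y3" "\<not> same_part C y2 y3"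
    using is_partition_not_same_part[OF assms(1)] by simp_all
qed

lemma claw_distinct:
  assumes "is_partition V C" "is_claw C w x y1 y2 y3"
  shows "distinct [x, y1, y2, y3]"
proof -
  have "same_part C a a" if "a \<in> {x, y1, y2, y3}" for a
    using assms(2) that unfolding is_claw_def same_part_def by blast
  then show ?thesis
    using claw_not_same_part[OF assms] by auto
qed

lemma claw_leaf_pair_weights:
  assumes claw: "is_claw C w x y1 y2 y3"
    and sym: "\<And>a b. a \<in> V \<Longrightarrow> b \<in> V \<Longrightarrow> w a b = w b a" and leaves: "{y1, y2, y3} \<subseteq> V"
    and "p \<in> {y1, y2, y3}" "q \<in> {y1, y2, y3}" "p \<noteq> q"
  shows "w x p = w x y1" "w p q < w x y1"
proof -
  have "w x y2 = w x y1" "w x y3 = w x y1"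
    "w y1 y2 < w x y1" "w y1 y3 < w x y1" "w y2 y3 < w x y1"
    using claw unfolding is_claw_def by auto
  moreover have "w y2 y1 = w y1 y2" "w y3 y1 = w y1 y3" "w y3 y2 = w y2 y3"
    using sym leaves by auto
  ultimately show "w x p = w x y1" "w p q < w x y1"
    using assms(4-6) by auto
qed

lemma valid_bipartition_two_claw_leaves_with_centre:
  assumes valid: "valid_partition V w {A, B}" and AB: "A \<inter> B = {}" "A \<union> B = V"
    and sym: "\<And>a b. a \<in> V \<Longrightarrow> b \<in> V \<Longrightarrow> w a b = w b a"
    and C: "is_partition V C" and claw: "is_claw C w x y1 y2 y3"
    and "x \<in> A" and leaves: "{y1, y2, y3} \<subseteq> V"
  obtains p q where "p \<in> {y1, y2, y3}" "q \<in> {y1, y2, y3}" "p \<noteq> q" "p \<in> A" "q \<in> A"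
proof -
  have distinct: "distinct [x, y1, y2, y3]"
    using claw_distinct[OF C claw] .
  have two_in_B: False if "a \<in> {y1, y2, y3}" "b \<in> {y1, y2, y3}" "a \<noteq> b" "a \<in> B" "b \<in> B" for a b
  proof -
    have "same_part {A, B} x a"
    proof (rule valid_partition_apex_same_part[OF valid])
      show "w x a = w x b" "w a b < w x a"
        using claw_leaf_pair_weights[OF claw sym leaves] that(1-3) by metis+
    qed (use that distinct AB \<open>x \<in> A\<close> in \<open>auto simp: same_part_pair_iff\<close>)
    with that AB \<open>x \<in> A\<close> show False
      by (auto simp: same_part_pair_iff)
  qed
  have "y1 \<in> A \<or> y1 \<in> B" "y2 \<in> A \<or> y2 \<in> B" "y3 \<in> A \<or> y3 \<in> B"
    using AB leaves by auto
  then show thesis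
    using two_in_B[of y1 y2] two_in_B[of y1 y3] two_in_B[of y2 y3]
      that[of y1 y2] that[of y1 y3] that[of y2 y3] distinct by auto
qed

lemma valid_bipartition_far_side_same_part:
  assumes vC: "valid_partition V w C" and valid: "valid_partition V w {A, B}"
    and AB: "A \<inter> B = {}" "A \<union> B = V"
    and sym: "\<And>a b. a \<in> V \<Longrightarrow> b \<in> V \<Longrightarrow> w a b = w b a"
    and x: "x \<in> A" and pq: "p \<in> A" "q \<in> A" "p \<noteq> q" "w p q < w x p"
    and sep: "\<not> same_part C x p"
    and uv: "u \<in> B" "v \<in> B"
  shows "same_part C u v"
proof -
  have partC: "is_partition V C"
    using vC unfolding valid_partition_def by blast
  have xp: "x \<in> V" "p \<in> V" "x \<noteq> p"
    using x pq AB sep same_part_refl[OF partC] by auto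
  have light: "w p b < w x p" if "b \<in> B" for b
    using valid_bipartition_cross_weight_le[OF valid AB sym pq(1,2) that pq(3)] pq(4) by linarith
  have centre: "w x b = w x p" if b: "b \<in> B" for b
  proof -
    have bV: "b \<in> V" "b \<noteq> x" "b \<noteq> p"
      using b AB x pq by auto
    have "w x p \<le> max (w x b) (w p b)"
      using valid_partition_weight_le_max[OF vC xp(1,2) bV(1)] xp bV sep by simp
    moreover have "w x b \<le> max (w x p) (w b p)"
      using valid_partition_weight_le_max[OF valid xp(1) bV(1) xp(2)] xp bV b x AB
      by (auto simp: same_part_pair_iff)
    ultimately show ?thesis
      using light[OF b] sym[OF xp(2) bV(1)] by linarith
  qed
  show ?thesis
  proof (rule ccontr)
    assume apart: "\<not> same_part C u v"
    have uvV: "u \<in> V" "v \<in> V" "u \<noteq> v" "u \<noteq> x" "v \<noteq> x" "u \<noteq> p" "v \<noteq> p"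
      using uv AB x pq apart same_part_refl[OF partC] by auto
    have "w u v \<le> max (w u p) (w v p)"
      using valid_partition_weight_le_max[OF vC uvV(1,2) xp(2)] uvV apart by simp
    then have "w u v < w x u"
      using light[OF uv(1)] light[OF uv(2)] sym[OF xp(2) uvV(1)] sym[OF xp(2) uvV(2)]
        centre[OF uv(1)] by linarith
    then have "same_part {A, B} x u"
      using valid_partition_apex_same_part[OF valid xp(1) uvV(1,2)] uvV
        centre[OF uv(1)] centre[OF uv(2)] uv by (simp add: same_part_pair_iff)
    with x uv AB show False
      by (auto simp: same_part_pair_iff)
  qed
qed

lemma minimal_valid_partition_mem_if_same_part:
  assumes min: "minimal_valid_partition V w C" and valid: "valid_partition V w {A, B}"
    and AB: "A \<inter> B = {}" and b: "b \<in> B" and same: "\<And>u. u \<in> B \<Longrightarrow> same_part C u b"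
  shows "B \<in> C"
proof -
  obtain S where S: "S \<in> C" "b \<in> S"
    using same[OF b] unfolding same_part_def by blast
  have partC: "is_partition V C"
    using min unfolding minimal_valid_partition_def valid_partition_def by blast
  have "B \<subseteq> S"
  proof
    fix u assume "u \<in> B"
    then obtain U where U: "U \<in> C" "u \<in> U" "b \<in> U"
      using same unfolding same_part_def by blast
    with S partC have "U = S"
      unfolding is_partition_def by blast
    with U show "u \<in> S" by simp
  qed
  moreover obtain T where "T \<in> {A, B}" "S \<subseteq> T"
    using min valid S(1) unfolding minimal_valid_partition_def refines_def by blast
  ultimately show ?thesis
    using S AB b by auto
qed

lemma valid_bipartition_far_side_mem_minimal:
  assumes min: "minimal_valid_partition V w C" and valid: "valid_partition V w {A, B}"
    and AB: "A \<inter> B = {}" "A \<union> B = V" "B \<noteq> {}"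
    and sym: "\<And>a b. a \<in> V \<Longrightarrow> b \<in> V \<Longrightarrow> w a b = w b a"
    and claw: "is_claw C w x y1 y2 y3" and "x \<in> A" and leaves: "{y1, y2, y3} \<subseteq> V"
  shows "B \<in> C"
proof -
  have vC: "valid_partition V w C"
    using min unfolding minimal_valid_partition_def by blast
  then have partC: "is_partition V C"
    unfolding valid_partition_def by blast
  obtain p q where pq: "p \<in> {y1, y2, y3}" "q \<in> {y1, y2, y3}" "p \<noteq> q" "p \<in> A" "q \<in> A"
    using valid_bipartition_two_claw_leaves_with_centre[OF valid AB(1,2) sym partC claw \<open>x \<in> A\<close> leaves] .
  have "w p q < w x p" "\<not> same_part C x p"
    using claw_leaf_pair_weights[OF claw sym leaves pq(1-3)] claw_not_same_part[OF partC claw] pq(1)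
    by auto
  moreover obtain b where "b \<in> B"
    using AB(3) by blast
  ultimately show "B \<in> C"
    using minimal_valid_partition_mem_if_same_part[OF min valid AB(1)]
      valid_bipartition_far_side_same_part[OF vC valid AB(1,2) sym \<open>x \<in> A\<close> pq(4,5,3)] by blast
qed

lemma valid_bipartition_light_clique_insert:
  assumes valid: "valid_partition V w {A, B}" and AB: "A \<inter> B = {}" "A \<union> B = V"
    and sym: "\<And>a b. a \<in> V \<Longrightarrow> b \<in> V \<Longrightarrow> w a b = w b a"
    and K: "light_clique w W K" "K \<subseteq> A" and pq: "p \<in> K" "q \<in> A" "p \<noteq> q" "w p q < W"
    and y: "y \<in> B"
  shows "light_clique w W (insert y K)"
proof -
  have y_V: "y \<in> V"
    using y AB by blast
  have py: "w p y < W"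
    using valid_bipartition_cross_weight_le[OF valid AB sym _ pq(2) y pq(3)] pq K(2) by force
  have zy: "w z y < W" if "z \<in> K" for z
  proof (cases "z = p")
    case False
    have zV: "z \<in> V" "p \<in> V" "z \<noteq> y" "p \<noteq> y"
      using that pq K(2) y AB by auto
    have "w z y \<le> max (w z p) (w y p)"
      using valid_partition_weight_le_max[OF valid zV(1) y_V zV(2)] zV False that pq y K(2) AB
      by (auto simp: same_part_pair_iff)
    moreover have "w z p < W"
      using K(1) that pq(1) False unfolding light_clique_def by blast
    ultimately show ?thesis
      using py sym[OF zV(2) y_V] by linarith
  qed (use py in simp)
  show ?thesis
    unfolding light_clique_def
  proof (intro ballI impI)
    fix a b assume "a \<in> insert y K" "b \<in> insert y K" "a \<noteq> b"
    then consider "a = y" "b \<in> K" | "b = y" "a \<in> K" | "a \<in> K" "b \<in> K"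
      by auto
    then show "w a b < W"
    proof cases
      case 1
      with zy[of b] sym[OF y_V, of b] K(2) AB show ?thesis by auto
    next
      case 2
      with zy show ?thesis by simp
    next
      case 3
      with K(1) \<open>a \<noteq> b\<close> show ?thesis unfolding light_clique_def by blast
    qed
  qed
qed

lemma valid_bipartition_maximal_light_clique_meets_far_side:
  assumes valid: "valid_partition V w {A, B}" and AB: "A \<inter> B = {}" "A \<union> B = V"
    and sym: "\<And>a b. a \<in> V \<Longrightarrow> b \<in> V \<Longrightarrow> w a b = w b a"
    and V': "finite V'" "V' \<subseteq> V" and K: "light_clique w W K" "K \<subseteq> V'"
    and maximal: "\<And>L. K \<subseteq> L \<Longrightarrow> L \<subseteq> V' \<Longrightarrow> light_clique w W L \<Longrightarrow> card L \<le> card K"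
    and pq: "p \<in> K" "q \<in> K" "p \<noteq> q"
    and y: "y \<in> B" "y \<in> V'" "\<And>z. z \<in> V' \<Longrightarrow> z \<in> B \<Longrightarrow> z = y"
  shows "y \<in> K"
proof (rule ccontr)
  assume "y \<notin> K"
  with K(2) y(3) have "K \<subseteq> A"
    using AB V'(2) by blast
  moreover have "w p q < W"
    using K(1) pq unfolding light_clique_def by blast
  ultimately have "light_clique w W (insert y K)"
    using valid_bipartition_light_clique_insert[OF valid AB sym K(1) _ pq(1) _ pq(3) _ y(1)] pq(2)
    by blast
  then have "card (insert y K) \<le> card K"
    using K(2) y(2) by (intro maximal) auto
  moreover have "finite K"
    using V'(1) K(2) finite_subset by blast
  ultimately show False
    using \<open>y \<notin> K\<close> by simp
qed

theorem lemma1: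
  fixes V :: "'a set" and w :: "'a \<Rightarrow> 'a \<Rightarrow> real" and C :: "'a set set"
    and y1 y2 y3 ym :: 'a and V' Cl :: "'a set"
  assumes graph: "weighted_graph V w"
    and admits: "\<exists>P. valid_partition V w P"
    and minC: "minimal_valid_partition V w C"
    and claw: "is_claw C w ym y1 y2 y3"
    and V'_sub: "V' \<subseteq> V"
    and V'_reps: "\<forall>S\<in>C. \<exists>!y. y \<in> S \<and> y \<in> V'"
    and ys_in: "y1 \<in> V'" "y2 \<in> V'" "y3 \<in> V'" "ym \<in> V'"
    and Cl_sub: "Cl \<subseteq> V'"
    and Cl_ys: "y1 \<in> Cl" "y2 \<in> Cl" "y3 \<in> Cl"
    and Cl_clique: "\<forall>a\<in>Cl. \<forall>b\<in>Cl. a \<noteq> b \<longrightarrow> w a b < w y1 ym"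
    and Cl_max: "\<forall>K. K \<subseteq> V' \<and> y1 \<in> K \<and> y2 \<in> K \<and> y3 \<in> K \<and>
                   (\<forall>a\<in>K. \<forall>b\<in>K. a \<noteq> b \<longrightarrow> w a b < w y1 ym) \<longrightarrow> card K \<le> card Cl"
  shows "(\<exists>P. valid_bipartition V w P) \<longleftrightarrow>
         (\<exists>y\<in>Cl. \<exists>S\<in>C. y \<in> S \<and> valid_partition V w {S, V - S})"
proof
  assume "\<exists>y\<in>Cl. \<exists>S\<in>C. y \<in> S \<and> valid_partition V w {S, V - S}"
  then show "\<exists>P. valid_bipartition V w P"
    using valid_partition_pair_is_bipartition by blast
next
  assume "\<exists>P. valid_bipartition V w P"
  then obtain P where P: "valid_partition V w P" "card P = 2"
    unfolding valid_bipartition_def by blast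
  have partC: "is_partition V C"
    using minC unfolding minimal_valid_partition_def valid_partition_def by blast
  have sym: "\<And>a b. a \<in> V \<Longrightarrow> b \<in> V \<Longrightarrow> w a b = w b a" and "finite V"
    using graph unfolding weighted_graph_def by auto
  have ysV: "{y1, y2, y3} \<subseteq> V" "ym \<in> V"
    using ys_in V'_sub by auto
  have "is_partition V P"
    using P(1) unfolding valid_partition_def by blast
  then obtain A B where AB: "P = {A, B}" "A \<inter> B = {}" "A \<union> B = V" "ym \<in> A" "B \<noteq> {}"
    by (rule bipartition_with_first_part_containing[OF _ P(2) ysV(2)])
  with P have valid: "valid_partition V w {A, B}"
    by simp
  have "B \<in> C"
    using valid_bipartition_far_side_mem_minimal[OF minC valid AB(2,3,5) sym claw AB(4) ysV(1)] .
  with V'_reps have "\<exists>!y. y \<in> B \<and> y \<in> V'"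
    by blast
  then obtain y where y: "y \<in> B" "y \<in> V'" "\<And>z. z \<in> V' \<Longrightarrow> z \<in> B \<Longrightarrow> z = y"
    by blast
  have "y \<in> Cl"
  proof (rule valid_bipartition_maximal_light_clique_meets_far_side
      [OF valid AB(2,3) sym finite_subset[OF V'_sub \<open>finite V\<close>] V'_sub _ Cl_sub _ Cl_ys(1,2) _ y])
    show "light_clique w (w y1 ym) Cl"
      using Cl_clique unfolding light_clique_def .
    show "card L \<le> card Cl" if "Cl \<subseteq> L" "L \<subseteq> V'" "light_clique w (w y1 ym) L" for L
      using Cl_max[rule_format, of L] that Cl_ys unfolding light_clique_def by blast
    show "y1 \<noteq> y2"
      using claw_distinct[OF partC claw] by simp
  qed
  moreover have "{B, V - B} = P"
    using AB by auto
  ultimately show "\<exists>y\<in>Cl. \<exists>S\<in>C. y \<in> S \<and> valid_partition V w {S, V - S}"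
    using \<open>B \<in> C\<close> y(1) P(1) by blast
qed

end
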